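(* Let $V$ be a finite set, $s,t\in V$, $d$ an $st$-separating semi-metric on $V$, and $A\subseteq V$ nonempty. Define $f_A^{\pm}:V\to\mathbb R^2$ by $f_A^{\pm}(v)=(f_A^{+}(v),f_A^{-}(v))$ where $f_A^{\sigma}(v)=\tfrac12\left[d(v,s)+\sigma\, d(v,A)\right]$ for $\sigma\in\{+1,-1\}$ and $d(v,A)=\min_{a\in A}d(v,a)$. Then for all $u,v\in V$, \[\|f_A^{\pm}(u)-f_A^{\pm}(v)\|_1\le 2\,d(u,v).\]
   Context: A semi-metric on $V$ is a symmetric map $d:V\times V\to\mathbb R_{\ge0}$ with $d(v,v)=0$ satisfying the triangle inequality; it is $st$-separating if $d(s,t)=d(s,v)+d(v,t)$ for all $v\in V$. *)

theory Defs
  imports Complex_Main "HOL-Library.Product_Plus"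
begin

definition semi_metric :: "'a set \<Rightarrow> ('a \<Rightarrow> 'a \<Rightarrow> real) \<Rightarrow> bool" where
  "semi_metric V d \<longleftrightarrow>
     (\<forall>u\<in>V. \<forall>v\<in>V. d u v \<ge> 0 \<and> d u v = d v u) \<and>
     (\<forall>v\<in>V. d v v = 0) \<and>
     (\<forall>u\<in>V. \<forall>v\<in>V. \<forall>w\<in>V. d u w \<le> d u v + d v w)"

definition st_separating :: "'a set \<Rightarrow> ('a \<Rightarrow> 'a \<Rightarrow> real) \<Rightarrow> 'a \<Rightarrow> 'a \<Rightarrow> bool" where
  "st_separating V d s t \<longleftrightarrow> semi_metric V d \<and> (\<forall>v\<in>V. d s t = d s v + d v t)"

definition dist_to_set :: "('a \<Rightarrow> 'a \<Rightarrow> real) \<Rightarrow> 'a \<Rightarrow> 'a set \<Rightarrow> real" where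
  "dist_to_set d v A = Min ((\<lambda>a. d v a) ` A)"

definition f_sigma :: "('a \<Rightarrow> 'a \<Rightarrow> real) \<Rightarrow> 'a \<Rightarrow> 'a set \<Rightarrow> real \<Rightarrow> 'a \<Rightarrow> real" where
  "f_sigma d s A \<sigma> v = (d v s + \<sigma> * dist_to_set d v A) / 2"

definition f_pm :: "('a \<Rightarrow> 'a \<Rightarrow> real) \<Rightarrow> 'a \<Rightarrow> 'a set \<Rightarrow> 'a \<Rightarrow> real \<times> real" where
  "f_pm d s A v = (f_sigma d s A 1 v, f_sigma d s A (-1) v)"

definition l1_norm2 :: "real \<times> real \<Rightarrow> real" where
  "l1_norm2 p = \<bar>fst p\<bar> + \<bar>snd p\<bar>"

end

theory Submission
  imports Defs
begin

text \<open>Both coordinates of \<open>f_pm\<close> are averages of \<open>d(\<cdot>, s)\<close> and \<open>\<plusminus> d(\<cdot>, A)\<close>,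
  and both of these are 1-Lipschitz by the triangle inequality. The \<open>\<ell>\<^sub>1\<close> norm of
  \<open>((x + y)/2, (x - y)/2)\<close> equals \<open>max \<bar>x\<bar> \<bar>y\<bar>\<close>, so the bound even holds with
  constant 1.\<close>

lemma semi_metricD:
  assumes "semi_metric V d" "u \<in> V" "v \<in> V" "w \<in> V"
  shows "d u v \<ge> 0" "d u v = d v u" "d u w \<le> d u v + d v w"
  using assms unfolding semi_metric_def by blast+

lemma abs_dist_diff_le:
  assumes "semi_metric V d" "u \<in> V" "v \<in> V" "s \<in> V"
  shows "\<bar>d u s - d v s\<bar> \<le> d u v"
  using semi_metricD[OF assms(1,2,3,4)] semi_metricD[OF assms(1,3,2,4)] by linarith

lemma dist_to_set_attained:
  assumes "finite A" "A \<noteq> {}"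
  obtains a where "a \<in> A" "dist_to_set d v A = d v a"
proof -
  have "Min ((\<lambda>a. d v a) ` A) \<in> (\<lambda>a. d v a) ` A"
    using assms by (intro Min_in) auto
  then show ?thesis using that unfolding dist_to_set_def by blast
qed

lemma dist_to_set_le: "finite A \<Longrightarrow> a \<in> A \<Longrightarrow> dist_to_set d u A \<le> d u a"
  unfolding dist_to_set_def by (intro Min_le) auto

lemma dist_to_set_le_dist_plus:
  assumes "semi_metric V d" "finite A" "A \<subseteq> V" "A \<noteq> {}" "u \<in> V" "v \<in> V"
  shows "dist_to_set d u A \<le> d u v + dist_to_set d v A"
proof -
  obtain a where a: "a \<in> A" "dist_to_set d v A = d v a"
    using dist_to_set_attained[OF assms(2,4)] .
  have "dist_to_set d u A \<le> d u a" using dist_to_set_le[OF assms(2) a(1)] .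
  also have "\<dots> \<le> d u v + d v a"
    using semi_metricD(3)[OF assms(1,5,6)] a(1) assms(3) by blast
  finally show ?thesis using a(2) by simp
qed

lemma abs_dist_to_set_diff_le:
  assumes "semi_metric V d" "finite A" "A \<subseteq> V" "A \<noteq> {}" "u \<in> V" "v \<in> V"
  shows "\<bar>dist_to_set d u A - dist_to_set d v A\<bar> \<le> d u v"
  using dist_to_set_le_dist_plus[OF assms] dist_to_set_le_dist_plus[OF assms(1-4,6,5)]
    semi_metricD(2)[OF assms(1,5,6,6)] by linarith

lemma abs_half_sum_plus_abs_half_diff:
  fixes x y :: real
  shows "\<bar>(x + y) / 2\<bar> + \<bar>(x - y) / 2\<bar> = max \<bar>x\<bar> \<bar>y\<bar>"
  by (simp add: abs_if max_def field_simps)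

lemma l1_norm2_f_pm_diff:
  "l1_norm2 (f_pm d s A u - f_pm d s A v)
     = max \<bar>d u s - d v s\<bar> \<bar>dist_to_set d u A - dist_to_set d v A\<bar>"
proof -
  let ?x = "d u s - d v s" and ?y = "dist_to_set d u A - dist_to_set d v A"
  have "f_pm d s A u - f_pm d s A v = ((?x + ?y) / 2, (?x - ?y) / 2)"
    unfolding f_pm_def f_sigma_def by (simp add: algebra_simps diff_divide_distrib)
  then show ?thesis
    unfolding l1_norm2_def by (simp only: fst_conv snd_conv abs_half_sum_plus_abs_half_diff)
qed

theorem proposition2p8:
  fixes V :: "'a set" and d :: "'a \<Rightarrow> 'a \<Rightarrow> real" and s t :: 'a and A :: "'a set"
  assumes "finite V" and "s \<in> V" and "t \<in> V"
    and "st_separating V d s t"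
    and "A \<subseteq> V" and "A \<noteq> {}"
    and "u \<in> V" and "v \<in> V"
  shows "l1_norm2 (f_pm d s A u - f_pm d s A v) \<le> 2 * d u v"
proof -
  have sm: "semi_metric V d" using assms(4) unfolding st_separating_def by blast
  have "finite A" using assms(1,5) finite_subset by blast
  have "l1_norm2 (f_pm d s A u - f_pm d s A v) \<le> d u v"
    unfolding l1_norm2_f_pm_diff
    using abs_dist_diff_le[OF sm assms(7,8,2)]
      abs_dist_to_set_diff_le[OF sm \<open>finite A\<close> assms(5,6,7,8)] by simp
  also have "\<dots> \<le> 2 * d u v" using semi_metricD(1)[OF sm assms(7,8,8)] by simp
  finally show ?thesis .
qed

end
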